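(* For every $T\ge1$ and $\tau_0\in\{1,\dots,T\}$ there exist parameters $\eta>0$ and $\alpha\in[0,1]$ (depending on $\tau_0$, $T$ and $d$) such that the fixed-share algorithm with these parameters satisfies, for all loss vectors $\ell_1,\dots,\ell_T\in[0,1]^d$, \[ \mathcal R_T^{\tau_0\text{-adapt}}\le\sqrt{\frac{\tau_0}{2}\Big(\tau_0\,h\Big(\frac1{\tau_0}\Big)+\ln d\Big)}\le\sqrt{\frac{\tau_0}{2}\ln(ed\tau_0)}. \]
   Context: Let $d\ge1$ and $\Delta_d=\{q\in[0,1]^d:\sum_{i=1}^d q_i=1\}$. The generalized share algorithm with learning rate $\eta>0$ and mixing functions $\psi_t:[0,1]^{td}\to\Delta_d$ ($t\ge2$) works as follows: $\hat p_1=v_1=(1/d,\dots,1/d)$. At each round $t=1,2,\dots$ it predicts $\hat p_t=(\hat p_{1,t},\dots,\hat p_{d,t})\in\Delta_d$, observes a loss vector $\ell_t=(\ell_{1,t},\dots,\ell_{d,t})\in[0,1]^d$ (arbitrary), and suffers loss $\hat p_t^\top\ell_t$. It then forms the pre-weights $v_{j,t+1}=\hat p_{j,t}e^{-\eta\ell_{j,t}}/\sum_{i=1}^d\hat p_{i,t}e^{-\eta\ell_{i,t}}$ for $j=1,\dots,d$, sets $v_{t+1}=(v_{1,t+1},\dots,v_{d,t+1})$, and defines $\hat p_{t+1}=\psi_{t+1}(V_{t+1})$ where $V_{t+1}=[v_{i,s}]_{1\le i\le d,1\le s\le t+1}$ is the $d\times(t+1)$ matrix of all pre-weights so far. The fixed-share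 algorithm with parameters $\eta>0$, $\alpha\in[0,1]$ is the generalized share algorithm with the mixing rule $\hat p_{j,t+1}=\alpha/d+(1-\alpha)v_{j,t+1}$ for all $j$ and $t\ge1$. The $\tau_0$-adaptive regret is $\mathcal R_T^{\tau_0\text{-adapt}}=\max\big\{\sum_{t=r}^s\hat p_t^\top\ell_t-\min_{q\in\Delta_d}\sum_{t=r}^sq^\top\ell_t\big\}$, the maximum over integers $1\le r\le s\le T$ with $s+1-r\le\tau_0$. $h(x)=-x\ln x-(1-x)\ln(1-x)$ is the binary entropy on $[0,1]$ (with $0\ln0=0$). *)

theory Defs
  imports Complex_Main
begin

(* Experts are indexed 0..d-1; rounds are indexed 1,2,...
   A loss sequence is l :: nat => nat => real, with l t j the loss of expert j at round t.
   A weight vector is p :: nat => real, only p j for j < d matters. *)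

definition simplex :: "nat \<Rightarrow> (nat \<Rightarrow> real) set" where
  "simplex d = {q. (\<forall>j<d. 0 \<le> q j \<and> q j \<le> 1) \<and> (\<Sum>j<d. q j) = 1}"

definition uniform_weights :: "nat \<Rightarrow> nat \<Rightarrow> real" where
  "uniform_weights d = (\<lambda>j. 1 / real d)"

definition ew_update :: "nat \<Rightarrow> real \<Rightarrow> (nat \<Rightarrow> real) \<Rightarrow> (nat \<Rightarrow> real) \<Rightarrow> nat \<Rightarrow> real" where
  "ew_update d \<eta> p lt = (\<lambda>j. p j * exp (- \<eta> * lt j) / (\<Sum>i<d. p i * exp (- \<eta> * lt i)))"

(* fixed-share predictions: fixed_share d \<eta> \<alpha> l t = \<hat>p_t for t \<ge> 1
   (the value at t = 0 is an unused dummy, equal to the uniform vector) *)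
primrec fixed_share :: "nat \<Rightarrow> real \<Rightarrow> real \<Rightarrow> (nat \<Rightarrow> nat \<Rightarrow> real) \<Rightarrow> nat \<Rightarrow> nat \<Rightarrow> real" where
  "fixed_share d \<eta> \<alpha> l 0 = uniform_weights d"
| "fixed_share d \<eta> \<alpha> l (Suc t) =
     (if t = 0 then uniform_weights d
      else (\<lambda>j. \<alpha> / real d + (1 - \<alpha>) * ew_update d \<eta> (fixed_share d \<eta> \<alpha> l t) (l t) j))"

definition interval_loss :: "nat \<Rightarrow> (nat \<Rightarrow> nat \<Rightarrow> real) \<Rightarrow> (nat \<Rightarrow> real) \<Rightarrow> nat \<Rightarrow> nat \<Rightarrow> real" where
  "interval_loss d l q r s = (\<Sum>t=r..s. \<Sum>j<d. q j * l t j)"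

definition fs_interval_regret :: "nat \<Rightarrow> real \<Rightarrow> real \<Rightarrow> (nat \<Rightarrow> nat \<Rightarrow> real) \<Rightarrow> nat \<Rightarrow> nat \<Rightarrow> real" where
  "fs_interval_regret d \<eta> \<alpha> l r s =
     (\<Sum>t=r..s. \<Sum>j<d. fixed_share d \<eta> \<alpha> l t j * l t j)
     - (INF q\<in>simplex d. interval_loss d l q r s)"

definition fs_adaptive_regret :: "nat \<Rightarrow> real \<Rightarrow> real \<Rightarrow> (nat \<Rightarrow> nat \<Rightarrow> real) \<Rightarrow> nat \<Rightarrow> nat \<Rightarrow> real" where
  "fs_adaptive_regret d \<eta> \<alpha> l T \<tau>0 =
     Max {fs_interval_regret d \<eta> \<alpha> l r s | r s. 1 \<le> r \<and> r \<le> s \<and> s \<le> T \<and> s + 1 - r \<le> \<tau>0}"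

definition xlnx :: "real \<Rightarrow> real" where
  "xlnx x = (if x = 0 then 0 else x * ln x)"

definition bin_entropy :: "real \<Rightarrow> real" where
  "bin_entropy x = - xlnx x - xlnx (1 - x)"

end

theory Submission imports Defs "HOL-Probability.Hoeffding" begin

(* Proof idea (fixed share with mixing rate alpha = 1/tau0).
   1. Hoeffding's lemma bounds the mixed loss p_t . l_t by the loss of any expert j plus
      (ln v_{j,t+1} - ln p_{j,t}) / eta + eta/8, where v_{t+1} is the exponential-weights update.
   2. The mixing step gives ln v_{j,t+1} <= ln p_{j,t+1} - ln (1 - alpha), so over an interval
      [r,s] the logarithms telescope; with v <= 1 and p_{j,r} >= alpha/d this bounds the loss
      on [r,s] by that of expert j plus (ln d + tau0 h(1/tau0))/eta + tau0 eta/8 when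
      s + 1 - r <= tau0.
   3. A bound valid against every expert is a bound against every mixture q in the simplex,
      hence on every interval regret, hence on the tau0-adaptive regret.
   4. Choosing eta = sqrt (8 C / tau0) for C = tau0 h(1/tau0) + ln d balances the two terms into
      sqrt (tau0 C / 2); the second inequality is tau0 h(1/tau0) <= 1 + ln tau0.
   The degenerate case of a single expert (regret 0) is treated separately, since then C may vanish. *)

lemma exp_neg_le_chord:
  fixes \<eta> y :: real
  assumes "\<eta> \<ge> 0" and "0 \<le> y" and "y \<le> 1"
  shows "exp (- \<eta> * y) \<le> (1 - y) + y * exp (- \<eta>)"
proof -
  have "exp (\<eta> * ((1 - y) *\<^sub>R 0 + y *\<^sub>R (-1))) \<le> (1 - y) * exp (\<eta> * 0) + y * exp (\<eta> * (-1))"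
    using assms by (intro convex_onD[OF convex_on_exp]) auto
  then show ?thesis by simp
qed

lemma hoeffding_finite:
  fixes p x :: "nat \<Rightarrow> real" and \<eta> :: real
  assumes p_nonneg: "\<forall>j<d. 0 \<le> p j" and p_sum: "(\<Sum>j<d. p j) = 1"
    and x_range: "\<forall>j<d. 0 \<le> x j \<and> x j \<le> 1" and \<eta>: "\<eta> > 0"
  shows "ln (\<Sum>j<d. p j * exp (- \<eta> * x j)) \<le> - \<eta> * (\<Sum>j<d. p j * x j) + \<eta>\<^sup>2 / 8"
proof -
  define m where "m = (\<Sum>j<d. p j * x j)"
  define S where "S = (\<Sum>j<d. p j * exp (- \<eta> * x j))"
  have "m \<le> (\<Sum>j<d. p j * 1)"
    unfolding m_def using p_nonneg x_range by (intro sum_mono mult_left_mono) auto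
  then have m_le_1: "m \<le> 1" using p_sum by simp
  have "S \<ge> (\<Sum>j<d. p j * exp (- \<eta>))"
    unfolding S_def using p_nonneg x_range \<eta> by (intro sum_mono mult_left_mono) auto
  moreover have "(\<Sum>j<d. p j * exp (- \<eta>)) = exp (- \<eta>)"
    using p_sum by (simp add: sum_distrib_right[symmetric])
  ultimately have S_pos: "S > 0" by (metis exp_gt_zero order_less_le_trans)
  have "S \<le> (\<Sum>j<d. p j * ((1 - x j) + x j * exp (- \<eta>)))"
    unfolding S_def using p_nonneg x_range \<eta> exp_neg_le_chord
    by (intro sum_mono mult_left_mono) auto
  also have "\<dots> = 1 - m + m * exp (- \<eta>)"
    unfolding m_def using p_sum
    by (simp add: algebra_simps sum.distrib sum_subtractf sum_distrib_left sum_distrib_right)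
  also have "\<dots> = exp (- \<eta>) * (1 + (1 - m) * (exp \<eta> - 1))"
    by (simp add: algebra_simps exp_minus field_simps)
  finally have "ln S \<le> ln (exp (- \<eta>) * (1 + (1 - m) * (exp \<eta> - 1)))"
    using S_pos by simp
  also have "\<dots> = - \<eta> + ln (1 + (1 - m) * (exp \<eta> - 1))"
  proof -
    have "exp \<eta> - 1 \<ge> 0" using \<eta> by simp
    then have "1 + (1 - m) * (exp \<eta> - 1) > 0" using m_le_1 by (simp add: add_pos_nonneg)
    then show ?thesis by (simp add: ln_mult)
  qed
  also have "\<dots> \<le> - \<eta> + (\<eta> * (1 - m) + \<eta>\<^sup>2 / 8)"
    using Hoeffdings_lemma_aux[of \<eta> "1 - m"] \<eta> m_le_1 by simp
  finally show ?thesis unfolding m_def S_def by (simp add: algebra_simps)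
qed

lemma ew_normalizer_pos:
  fixes p x :: "nat \<Rightarrow> real" and \<eta> :: real
  assumes p_nonneg: "\<forall>j<d. 0 \<le> p j" and p_sum: "(\<Sum>j<d. p j) = 1"
  shows "(\<Sum>i<d. p i * exp (- \<eta> * x i)) > 0"
proof -
  have "\<exists>k<d. p k > 0"
  proof (rule ccontr)
    assume "\<not> (\<exists>k<d. p k > 0)"
    then have "\<forall>j<d. p j = 0" using p_nonneg by (meson not_less order_antisym)
    then show False using p_sum by simp
  qed
  then obtain k where k: "k < d" "p k > 0" by blast
  show ?thesis using k p_nonneg by (intro sum_pos2[of _ k]) auto
qed

lemma ew_update_distribution:
  fixes p x :: "nat \<Rightarrow> real" and \<eta> :: real
  assumes p_nonneg: "\<forall>j<d. 0 \<le> p j" and p_sum: "(\<Sum>j<d. p j) = 1"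
  shows "\<forall>j<d. 0 \<le> ew_update d \<eta> p x j" and "(\<Sum>j<d. ew_update d \<eta> p x j) = 1"
proof -
  define W where "W = (\<Sum>i<d. p i * exp (- \<eta> * x i))"
  have W_pos: "W > 0" unfolding W_def using ew_normalizer_pos[OF p_nonneg p_sum] .
  show "\<forall>j<d. 0 \<le> ew_update d \<eta> p x j"
    using p_nonneg W_pos unfolding ew_update_def W_def[symmetric] by auto
  show "(\<Sum>j<d. ew_update d \<eta> p x j) = 1"
    using W_pos unfolding ew_update_def W_def[symmetric] by (simp add: sum_divide_distrib[symmetric] W_def)
qed

lemma ew_update_weight:
  fixes p x :: "nat \<Rightarrow> real" and \<eta> :: real
  assumes p_nonneg: "\<forall>i<d. 0 \<le> p i" and p_sum: "(\<Sum>i<d. p i) = 1"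
    and j: "j < d" and pj_pos: "p j > 0"
  shows "0 < ew_update d \<eta> p x j" and "ew_update d \<eta> p x j \<le> 1"
    and "ln (ew_update d \<eta> p x j) = ln (p j) - \<eta> * x j - ln (\<Sum>i<d. p i * exp (- \<eta> * x i))"
proof -
  define W where "W = (\<Sum>i<d. p i * exp (- \<eta> * x i))"
  have W_pos: "W > 0" unfolding W_def using ew_normalizer_pos[OF p_nonneg p_sum] .
  have upd: "ew_update d \<eta> p x j = p j * exp (- \<eta> * x j) / W"
    unfolding ew_update_def W_def by simp
  show "0 < ew_update d \<eta> p x j" using upd W_pos pj_pos by simp
  have "p j * exp (- \<eta> * x j) \<le> W"
    unfolding W_def using p_nonneg j by (intro member_le_sum) auto
  then show "ew_update d \<eta> p x j \<le> 1" using upd W_pos by simp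
  show "ln (ew_update d \<eta> p x j) = ln (p j) - \<eta> * x j - ln W"
    using upd W_pos pj_pos by (simp add: ln_div ln_mult)
qed

lemma ew_round_bound:
  fixes p x :: "nat \<Rightarrow> real" and \<eta> :: real
  assumes p_nonneg: "\<forall>i<d. 0 \<le> p i" and p_sum: "(\<Sum>i<d. p i) = 1"
    and j: "j < d" and pj_pos: "p j > 0"
    and x_range: "\<forall>i<d. 0 \<le> x i \<and> x i \<le> 1" and \<eta>: "\<eta> > 0"
  shows "(\<Sum>i<d. p i * x i) \<le> x j + (ln (ew_update d \<eta> p x j) - ln (p j)) / \<eta> + \<eta> / 8"
proof -
  define W where "W = (\<Sum>i<d. p i * exp (- \<eta> * x i))"
  have "\<eta> * (\<Sum>i<d. p i * x i) \<le> - ln W + \<eta>\<^sup>2 / 8"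
    using hoeffding_finite[OF p_nonneg p_sum x_range \<eta>] unfolding W_def by simp
  also have "- ln W = ln (ew_update d \<eta> p x j) - ln (p j) + \<eta> * x j"
    using ew_update_weight(3)[OF p_nonneg p_sum j pj_pos, of \<eta> x] unfolding W_def by simp
  finally show ?thesis using \<eta> by (simp add: field_simps power2_eq_square)
qed

lemma fixed_share_distribution:
  fixes l :: "nat \<Rightarrow> nat \<Rightarrow> real" and \<eta> \<alpha> :: real
  assumes d: "d \<ge> 1" and \<alpha>: "0 \<le> \<alpha>" "\<alpha> \<le> 1"
  shows "\<forall>j<d. \<alpha> / real d \<le> fixed_share d \<eta> \<alpha> l t j"
    and "(\<Sum>j<d. fixed_share d \<eta> \<alpha> l t j) = 1"
proof -
  have uniform: "(\<forall>j<d. \<alpha> / real d \<le> uniform_weights d j) \<and> (\<Sum>j<d. uniform_weights d j) = 1"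
    using d \<alpha> by (simp add: uniform_weights_def divide_right_mono)
  have "(\<forall>j<d. \<alpha> / real d \<le> fixed_share d \<eta> \<alpha> l t j) \<and> (\<Sum>j<d. fixed_share d \<eta> \<alpha> l t j) = 1"
  proof (induction t)
    case 0
    then show ?case using uniform by simp
  next
    case (Suc t)
    define v where "v = ew_update d \<eta> (fixed_share d \<eta> \<alpha> l t) (l t)"
    have p_nonneg: "\<forall>j<d. 0 \<le> fixed_share d \<eta> \<alpha> l t j"
      using Suc.IH \<alpha> by (meson divide_nonneg_nonneg of_nat_0_le_iff order_trans)
    note v = ew_update_distribution[OF p_nonneg conjunct2[OF Suc.IH], of \<eta> "l t", folded v_def]
    have "\<forall>j<d. \<alpha> / real d \<le> \<alpha> / real d + (1 - \<alpha>) * v j"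
      using v(1) \<alpha> by simp
    moreover have "(\<Sum>j<d. \<alpha> / real d + (1 - \<alpha>) * v j) = 1"
      using d v(2) by (simp add: sum.distrib sum_distrib_left[symmetric])
    ultimately show ?case using uniform by (simp add: v_def)
  qed
  then show "\<forall>j<d. \<alpha> / real d \<le> fixed_share d \<eta> \<alpha> l t j"
    and "(\<Sum>j<d. fixed_share d \<eta> \<alpha> l t j) = 1" by auto
qed

lemma fixed_share_pos:
  fixes l :: "nat \<Rightarrow> nat \<Rightarrow> real" and \<eta> \<alpha> :: real
  assumes d: "d \<ge> 1" and \<alpha>: "0 < \<alpha>" "\<alpha> \<le> 1"
  shows "\<forall>j<d. 0 < fixed_share d \<eta> \<alpha> l t j"
proof -
  have "\<alpha> / real d > 0" using \<alpha> d by simp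
  then show ?thesis using fixed_share_distribution(1)[OF d less_imp_le[OF \<alpha>(1)] \<alpha>(2)]
    by (meson less_le_trans)
qed

lemma fixed_share_mixing_step:
  fixes l :: "nat \<Rightarrow> nat \<Rightarrow> real" and \<eta> \<alpha> :: real
  assumes d: "d \<ge> 1" and \<alpha>: "0 < \<alpha>" "\<alpha> < 1" and j: "j < d" and t: "t \<ge> 1"
  shows "ln (ew_update d \<eta> (fixed_share d \<eta> \<alpha> l t) (l t) j)
     \<le> ln (fixed_share d \<eta> \<alpha> l (Suc t) j) - ln (1 - \<alpha>)"
proof -
  define p where "p = fixed_share d \<eta> \<alpha> l t"
  define v where "v = ew_update d \<eta> p (l t) j"
  have p_pos: "\<forall>i<d. 0 < p i" using fixed_share_pos[OF d \<alpha>(1) less_imp_le[OF \<alpha>(2)]] by (simp add: p_def)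
  have p_sum: "(\<Sum>i<d. p i) = 1"
    using fixed_share_distribution(2)[OF d less_imp_le[OF \<alpha>(1)] less_imp_le[OF \<alpha>(2)]] by (simp add: p_def)
  have v_pos: "v > 0"
    using ew_update_weight(1)[OF _ p_sum j] p_pos j unfolding v_def by (simp add: less_imp_le)
  have "fixed_share d \<eta> \<alpha> l (Suc t) j = \<alpha> / real d + (1 - \<alpha>) * v"
    using t by (simp add: p_def v_def)
  then have "(1 - \<alpha>) * v \<le> fixed_share d \<eta> \<alpha> l (Suc t) j" using \<alpha> by simp
  then have "ln ((1 - \<alpha>) * v) \<le> ln (fixed_share d \<eta> \<alpha> l (Suc t) j)"
    using v_pos \<alpha> by (intro ln_mono) auto
  then show ?thesis using v_pos \<alpha> by (simp add: ln_mult p_def v_def)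
qed

lemma telescoping_bound:
  fixes a b E P :: "nat \<Rightarrow> real" and c \<delta> :: real
  assumes "r \<le> s"
    and round: "\<And>t. r \<le> t \<Longrightarrow> t \<le> s \<Longrightarrow> a t \<le> b t + (E t - P t) + \<delta>"
    and link: "\<And>t. r \<le> t \<Longrightarrow> t < s \<Longrightarrow> E t \<le> P (Suc t) + c"
  shows "(\<Sum>t=r..s. a t) \<le> (\<Sum>t=r..s. b t) + E s - P r + real (s - r) * c + real (s - r + 1) * \<delta>"
  using assms
proof (induction s rule: dec_induct)
  case base
  then show ?case by simp
next
  case (step n)
  have "(\<Sum>t=r..n. a t) \<le> (\<Sum>t=r..n. b t) + E n - P r + real (n - r) * c + real (n - r + 1) * \<delta>"
    using step by simp
  moreover have "a (Suc n) \<le> b (Suc n) + (E (Suc n) - P (Suc n)) + \<delta>"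
    using step by simp
  moreover have "E n \<le> P (Suc n) + c" using step by simp
  moreover have "real (Suc n - r) * c = real (n - r) * c + c"
    and "real (Suc n - r + 1) * \<delta> = real (n - r + 1) * \<delta> + \<delta>"
    using step by (simp_all add: Suc_diff_le algebra_simps)
  moreover have "(\<Sum>t=r..Suc n. a t) = (\<Sum>t=r..n. a t) + a (Suc n)"
    and "(\<Sum>t=r..Suc n. b t) = (\<Sum>t=r..n. b t) + b (Suc n)"
    using step by simp_all
  ultimately show ?case by linarith
qed

(* Loss of fixed share on an interval [r,s], compared with expert j: the log-weights telescope,
   starting from p_{j,r} >= alpha/d and ending at v_{j,s+1} <= 1, and each of the s - r mixing
   steps costs -ln (1 - alpha) (so alpha < 1 is needed only when r < s). *)
lemma fixed_share_interval_bound: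
  fixes l :: "nat \<Rightarrow> nat \<Rightarrow> real" and \<eta> \<alpha> :: real
  assumes d: "d \<ge> 1" and \<alpha>: "0 < \<alpha>" "\<alpha> \<le> 1" and mixing: "r < s \<Longrightarrow> \<alpha> < 1"
    and j: "j < d" and \<eta>: "\<eta> > 0" and r: "1 \<le> r" "r \<le> s"
    and losses: "\<forall>t\<in>{r..s}. \<forall>i<d. 0 \<le> l t i \<and> l t i \<le> 1"
  shows "(\<Sum>t=r..s. \<Sum>i<d. fixed_share d \<eta> \<alpha> l t i * l t i)
     \<le> (\<Sum>t=r..s. l t j) + (ln (real d / \<alpha>) + real (s - r) * (- ln (1 - \<alpha>))) / \<eta>
        + real (s - r + 1) * (\<eta> / 8)"
proof -
  let ?p = "fixed_share d \<eta> \<alpha> l"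
  define E where "E t = ln (ew_update d \<eta> (?p t) (l t) j) / \<eta>" for t
  define P where "P t = ln (?p t j) / \<eta>" for t
  have p_pos: "\<forall>i<d. 0 < ?p t i" for t using fixed_share_pos[OF d \<alpha>] .
  have p_nonneg: "\<forall>i<d. 0 \<le> ?p t i" for t using p_pos by (simp add: less_imp_le)
  have p_sum: "(\<Sum>i<d. ?p t i) = 1" for t
    using fixed_share_distribution(2)[OF d less_imp_le[OF \<alpha>(1)] \<alpha>(2)] .
  have round: "(\<Sum>i<d. ?p t i * l t i) \<le> l t j + (E t - P t) + \<eta> / 8" if "r \<le> t" "t \<le> s" for t
    using ew_round_bound[OF p_nonneg p_sum j _ _ \<eta>, of t "l t"] p_pos j losses that
    unfolding E_def P_def by (simp add: diff_divide_distrib)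
  have link: "E t \<le> P (Suc t) + (- ln (1 - \<alpha>)) / \<eta>" if "r \<le> t" "t < s" for t
  proof -
    have mix: "ln (ew_update d \<eta> (?p t) (l t) j) \<le> ln (?p (Suc t) j) + (- ln (1 - \<alpha>))"
      using fixed_share_mixing_step[OF d \<alpha>(1) mixing j] that r by (simp del: fixed_share.simps)
    have "E t \<le> (ln (?p (Suc t) j) + (- ln (1 - \<alpha>))) / \<eta>"
      unfolding E_def using divide_right_mono[OF mix less_imp_le[OF \<eta>]] .
    then show ?thesis unfolding P_def by (simp only: add_divide_distrib)
  qed
  have "(\<Sum>t=r..s. \<Sum>i<d. ?p t i * l t i)
      \<le> (\<Sum>t=r..s. l t j) + E s - P r + real (s - r) * ((- ln (1 - \<alpha>)) / \<eta>) + real (s - r + 1) * (\<eta> / 8)"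
    using telescoping_bound[where a = "\<lambda>t. \<Sum>i<d. ?p t i * l t i" and b = "\<lambda>t. l t j" and E = E
        and P = P, OF r(2) round link] .
  moreover have "E s \<le> 0"
    using ew_update_weight(1,2)[OF p_nonneg p_sum j, of s] p_pos j \<eta>
    unfolding E_def by (simp add: divide_nonpos_pos)
  moreover have "- P r \<le> ln (real d / \<alpha>) / \<eta>"
  proof -
    have "\<alpha> / real d \<le> ?p r j" using fixed_share_distribution(1)[OF d less_imp_le[OF \<alpha>(1)] \<alpha>(2)] j by simp
    then have "ln (\<alpha> / real d) \<le> ln (?p r j)" using \<alpha> d by (intro ln_mono) auto
    moreover have "ln (real d / \<alpha>) = - ln (\<alpha> / real d)" using \<alpha> d by (simp add: ln_div)
    ultimately show ?thesis unfolding P_def using \<eta> by (simp add: divide_right_mono)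
  qed
  moreover have "(ln (real d / \<alpha>) + real (s - r) * (- ln (1 - \<alpha>))) / \<eta>
      = ln (real d / \<alpha>) / \<eta> + real (s - r) * ((- ln (1 - \<alpha>)) / \<eta>)"
    by (simp add: add_divide_distrib diff_divide_distrib)
  ultimately show ?thesis by linarith
qed

lemma scaled_bin_entropy:
  fixes \<tau> :: real
  assumes \<tau>: "\<tau> \<ge> 1"
  shows "\<tau> * bin_entropy (1 / \<tau>) = ln \<tau> + (\<tau> - 1) * (- ln (1 - 1 / \<tau>))"
proof (cases "\<tau> = 1")
  case True
  then show ?thesis by (simp add: bin_entropy_def xlnx_def)
next
  case False
  then have "\<tau> > 1" using \<tau> by simp
  then have "1 / \<tau> \<noteq> 0" and "1 - 1 / \<tau> \<noteq> 0" and "\<tau> * (1 - 1 / \<tau>) = \<tau> - 1"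
    and "ln (1 / \<tau>) = - ln \<tau>"
    by (auto simp: field_simps ln_div)
  then show ?thesis by (simp add: bin_entropy_def xlnx_def algebra_simps)
qed

lemma mixing_cost_bounds:
  fixes \<tau> :: real
  assumes \<tau>: "\<tau> \<ge> 1"
  shows "0 \<le> - ln (1 - 1 / \<tau>)" and "(\<tau> - 1) * (- ln (1 - 1 / \<tau>)) \<le> 1"
proof -
  have "0 \<le> - ln (1 - 1 / \<tau>) \<and> (\<tau> - 1) * (- ln (1 - 1 / \<tau>)) \<le> 1"
  proof (cases "\<tau> = 1")
    case True
    then show ?thesis by simp
  next
    case False
    define y where "y = 1 - 1 / \<tau>"
    have y: "0 < y" "y \<le> 1" "1 / y - 1 = 1 / (\<tau> - 1)"
      using False \<tau> by (auto simp: y_def field_simps)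
    have "- ln y = ln (1 / y)" using y(1) by (simp add: ln_div)
    also have "\<dots> \<le> 1 / y - 1" using y(1) by (intro ln_le_minus_one) simp
    finally have "(\<tau> - 1) * (- ln y) \<le> (\<tau> - 1) * (1 / (\<tau> - 1))"
      using \<tau> y(3) by (intro mult_left_mono) auto
    then show ?thesis using False \<tau> y(1,2) unfolding y_def by simp
  qed
  then show "0 \<le> - ln (1 - 1 / \<tau>)" and "(\<tau> - 1) * (- ln (1 - 1 / \<tau>)) \<le> 1"
    by simp_all
qed

lemma scaled_bin_entropy_bounds:
  fixes \<tau> :: real
  assumes \<tau>: "\<tau> \<ge> 1"
  shows "ln \<tau> \<le> \<tau> * bin_entropy (1 / \<tau>)" and "\<tau> * bin_entropy (1 / \<tau>) \<le> 1 + ln \<tau>"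
proof -
  have "0 \<le> (\<tau> - 1) * (- ln (1 - 1 / \<tau>))"
    using mixing_cost_bounds(1)[OF \<tau>] \<tau> by (intro mult_nonneg_nonneg) auto
  then show "ln \<tau> \<le> \<tau> * bin_entropy (1 / \<tau>)" using scaled_bin_entropy[OF \<tau>] by simp
  show "\<tau> * bin_entropy (1 / \<tau>) \<le> 1 + ln \<tau>"
    using scaled_bin_entropy[OF \<tau>] mixing_cost_bounds(2)[OF \<tau>] by simp
qed

lemma fixed_share_window_bound:
  fixes l :: "nat \<Rightarrow> nat \<Rightarrow> real" and \<eta> :: real and \<tau>0 :: nat
  assumes d: "d \<ge> 1" and \<tau>0: "\<tau>0 \<ge> 1" and j: "j < d" and \<eta>: "\<eta> > 0"
    and r: "1 \<le> r" "r \<le> s" and window: "s + 1 - r \<le> \<tau>0"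
    and losses: "\<forall>t\<in>{r..s}. \<forall>i<d. 0 \<le> l t i \<and> l t i \<le> 1"
  shows "(\<Sum>t=r..s. \<Sum>i<d. fixed_share d \<eta> (1 / real \<tau>0) l t i * l t i)
     \<le> (\<Sum>t=r..s. l t j) + (real \<tau>0 * bin_entropy (1 / real \<tau>0) + ln (real d)) / \<eta>
        + real \<tau>0 * \<eta> / 8"
proof -
  define c where "c = - ln (1 - 1 / real \<tau>0)"
  have mixing: "1 / real \<tau>0 < 1" if "r < s" using that window by simp
  have "(\<Sum>t=r..s. \<Sum>i<d. fixed_share d \<eta> (1 / real \<tau>0) l t i * l t i)
     \<le> (\<Sum>t=r..s. l t j) + (ln (real d / (1 / real \<tau>0)) + real (s - r) * c) / \<eta>
        + real (s - r + 1) * (\<eta> / 8)"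
    unfolding c_def using \<tau>0 by (intro fixed_share_interval_bound[OF d _ _ mixing j \<eta> r losses]) auto
  moreover have "(ln (real d / (1 / real \<tau>0)) + real (s - r) * c) / \<eta>
      \<le> (real \<tau>0 * bin_entropy (1 / real \<tau>0) + ln (real d)) / \<eta>"
  proof (rule divide_right_mono)
    have "ln (real d / (1 / real \<tau>0)) = ln (real d) + ln (real \<tau>0)" using d \<tau>0 by (simp add: ln_mult)
    moreover have "c \<ge> 0" using mixing_cost_bounds(1)[of "real \<tau>0"] \<tau>0 unfolding c_def by simp
    moreover have "real (s - r) \<le> real \<tau>0 - 1" using window r by linarith
    ultimately show "ln (real d / (1 / real \<tau>0)) + real (s - r) * c
        \<le> real \<tau>0 * bin_entropy (1 / real \<tau>0) + ln (real d)"
      using scaled_bin_entropy[of "real \<tau>0"] \<tau>0 mult_right_mono[of "real (s - r)" "real \<tau>0 - 1" c]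
      unfolding c_def by simp
  qed (use \<eta> in simp)
  moreover have "real (s - r + 1) * (\<eta> / 8) \<le> real \<tau>0 * \<eta> / 8"
    using window r \<eta> by (simp add: mult_right_mono)
  ultimately show ?thesis by linarith
qed

(* A bound against every single expert is a bound against every mixture q in the simplex, since
   the loss of q is the q-average of the experts' losses; hence it bounds the interval regret. *)
lemma interval_regret_le_of_experts:
  fixes l :: "nat \<Rightarrow> nat \<Rightarrow> real" and B :: real
  assumes d: "d \<ge> 1"
    and experts: "\<forall>j<d. (\<Sum>t=r..s. \<Sum>i<d. fixed_share d \<eta> \<alpha> l t i * l t i) \<le> (\<Sum>t=r..s. l t j) + B"
  shows "fs_interval_regret d \<eta> \<alpha> l r s \<le> B"
proof -
  define A where "A = (\<Sum>t=r..s. \<Sum>i<d. fixed_share d \<eta> \<alpha> l t i * l t i)"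
  have "uniform_weights d \<in> Defs.simplex d" using d by (simp add: Defs.simplex_def uniform_weights_def)
  then have nonempty: "Defs.simplex d \<noteq> {}" by blast
  have "A - B \<le> (INF q\<in>Defs.simplex d. interval_loss d l q r s)"
  proof (rule cINF_greatest[OF nonempty])
    fix q assume q: "q \<in> Defs.simplex d"
    have "A - B = (\<Sum>j<d. q j * (A - B))"
      using q unfolding Defs.simplex_def by (simp add: sum_distrib_right[symmetric])
    also have "\<dots> \<le> (\<Sum>j<d. q j * (\<Sum>t=r..s. l t j))"
      using q experts unfolding Defs.simplex_def A_def by (intro sum_mono mult_left_mono) auto
    also have "\<dots> = interval_loss d l q r s"
      unfolding interval_loss_def by (simp add: sum.swap[of _ "{r..s}"] sum_distrib_left)
    finally show "A - B \<le> interval_loss d l q r s" .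
  qed
  then show ?thesis unfolding fs_interval_regret_def A_def by linarith
qed

lemma adaptive_regret_le:
  assumes T: "T \<ge> 1" and \<tau>0: "\<tau>0 \<ge> 1"
    and windows: "\<And>r s. 1 \<le> r \<Longrightarrow> r \<le> s \<Longrightarrow> s \<le> T \<Longrightarrow> s + 1 - r \<le> \<tau>0 \<Longrightarrow>
      fs_interval_regret d \<eta> \<alpha> l r s \<le> B"
  shows "fs_adaptive_regret d \<eta> \<alpha> l T \<tau>0 \<le> B"
proof -
  define R where "R = {fs_interval_regret d \<eta> \<alpha> l r s | r s. 1 \<le> r \<and> r \<le> s \<and> s \<le> T \<and> s + 1 - r \<le> \<tau>0}"
  have "R \<subseteq> (\<lambda>(r, s). fs_interval_regret d \<eta> \<alpha> l r s) ` ({1..T} \<times> {1..T})"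
    unfolding R_def by auto
  then have "finite R" by (rule finite_subset) auto
  moreover have "fs_interval_regret d \<eta> \<alpha> l 1 1 \<in> R"
    unfolding R_def using T \<tau>0 by (auto intro!: exI[of _ 1])
  ultimately have "Max R \<le> B" using windows unfolding R_def by (intro Max.boundedI) auto
  then show ?thesis unfolding fs_adaptive_regret_def R_def .
qed

(* With a single expert, fixed share puts all weight on it and has no regret at all. *)
lemma single_expert_adaptive_regret:
  fixes l :: "nat \<Rightarrow> nat \<Rightarrow> real" and \<eta> \<alpha> :: real
  assumes T: "T \<ge> 1" and \<tau>0: "\<tau>0 \<ge> 1" and \<alpha>: "0 \<le> \<alpha>" "\<alpha> \<le> 1"
  shows "fs_adaptive_regret 1 \<eta> \<alpha> l T \<tau>0 \<le> 0"
proof (rule adaptive_regret_le[OF T \<tau>0])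
  have "fixed_share 1 \<eta> \<alpha> l t 0 = 1" for t
    using fixed_share_distribution(2)[of 1 \<alpha> \<eta> l t] \<alpha> by simp
  then show "fs_interval_regret 1 \<eta> \<alpha> l r s \<le> 0" for r s
    by (intro interval_regret_le_of_experts) simp_all
qed

lemma fixed_share_adaptive_regret_bound:
  fixes l :: "nat \<Rightarrow> nat \<Rightarrow> real" and \<eta> :: real and \<tau>0 :: nat
  assumes d: "d \<ge> 1" and T: "T \<ge> 1" and \<tau>0: "\<tau>0 \<ge> 1" and \<eta>: "\<eta> > 0"
    and losses: "\<forall>t\<in>{1..T}. \<forall>j<d. 0 \<le> l t j \<and> l t j \<le> 1"
  shows "fs_adaptive_regret d \<eta> (1 / real \<tau>0) l T \<tau>0
     \<le> (real \<tau>0 * bin_entropy (1 / real \<tau>0) + ln (real d)) / \<eta> + real \<tau>0 * \<eta> / 8"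
proof (rule adaptive_regret_le[OF T \<tau>0])
  fix r s assume r: "1 \<le> r" "r \<le> s" and "s \<le> T" and window: "s + 1 - r \<le> \<tau>0"
  then have "\<forall>t\<in>{r..s}. \<forall>i<d. 0 \<le> l t i \<and> l t i \<le> 1" using losses by auto
  then show "fs_interval_regret d \<eta> (1 / real \<tau>0) l r s
      \<le> (real \<tau>0 * bin_entropy (1 / real \<tau>0) + ln (real d)) / \<eta> + real \<tau>0 * \<eta> / 8"
    using fixed_share_window_bound[OF d \<tau>0 _ \<eta> r window]
    by (intro interval_regret_le_of_experts[OF d]) (simp add: add.assoc)
qed

lemma balanced_learning_rate:
  fixes C \<tau> :: real
  assumes C: "C > 0" and \<tau>: "\<tau> > 0"
  defines "\<eta> \<equiv> sqrt (8 * C / \<tau>)"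
  shows "\<eta> > 0" and "C / \<eta> + \<tau> * \<eta> / 8 = sqrt (\<tau> / 2 * C)"
proof -
  show \<eta>_pos: "\<eta> > 0" unfolding \<eta>_def using C \<tau> by simp
  have \<eta>_sq: "\<eta> * \<eta> = 8 * C / \<tau>" unfolding \<eta>_def using C \<tau> by simp
  have "sqrt (\<tau> / 2 * C) * \<eta> = sqrt (\<tau> / 2 * C * (8 * C / \<tau>))"
    unfolding \<eta>_def by (rule real_sqrt_mult[symmetric])
  also have "\<tau> / 2 * C * (8 * C / \<tau>) = (2 * C)\<^sup>2" using \<tau> by (simp add: field_simps power2_eq_square)
  also have "sqrt ((2 * C)\<^sup>2) = 2 * C" using C by (subst real_sqrt_abs) simp
  finally have "sqrt (\<tau> / 2 * C) * \<eta> = 2 * C" .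
  moreover have "(C / \<eta> + \<tau> * \<eta> / 8) * \<eta> = 2 * C"
    using \<eta>_pos \<eta>_sq \<tau> by (simp add: field_simps)
  ultimately show "C / \<eta> + \<tau> * \<eta> / 8 = sqrt (\<tau> / 2 * C)"
    using \<eta>_pos by (metis mult_right_cancel less_irrefl)
qed

lemma fixed_share_tuned_adaptive_regret:
  fixes d T \<tau>0 :: nat
  assumes d: "d \<ge> 1" and T: "T \<ge> 1" and \<tau>0: "\<tau>0 \<ge> 1"
  defines "C \<equiv> real \<tau>0 * bin_entropy (1 / real \<tau>0) + ln (real d)"
  shows "\<exists>\<eta> > 0. \<forall>l :: nat \<Rightarrow> nat \<Rightarrow> real. (\<forall>t\<in>{1..T}. \<forall>j<d. 0 \<le> l t j \<and> l t j \<le> 1) \<longrightarrow>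
      fs_adaptive_regret d \<eta> (1 / real \<tau>0) l T \<tau>0 \<le> sqrt (real \<tau>0 / 2 * C)"
proof -
  have C_lower: "ln (real d) \<le> C" and log_d: "0 \<le> ln (real d)"
  proof -
    have "0 \<le> ln (real \<tau>0)" using \<tau>0 by simp
    then show "ln (real d) \<le> C" unfolding C_def using scaled_bin_entropy_bounds(1)[of "real \<tau>0"] \<tau>0
      by linarith
    show "0 \<le> ln (real d)" using d by simp
  qed
  show ?thesis
  proof (cases "d = 1")
    case True
    have bound_nonneg: "0 \<le> sqrt (real \<tau>0 / 2 * C)" using C_lower log_d by simp
    have "fs_adaptive_regret 1 1 (1 / real \<tau>0) l T \<tau>0 \<le> 0" for l
      using single_expert_adaptive_regret[OF T \<tau>0, of "1 / real \<tau>0"] \<tau>0 by simp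
    then have "fs_adaptive_regret d 1 (1 / real \<tau>0) l T \<tau>0 \<le> sqrt (real \<tau>0 / 2 * C)" for l
      using bound_nonneg True by (metis order_trans)
    then show ?thesis by (intro exI[of _ 1]) simp
  next
    case False
    then have "0 < ln (real d)" using d by simp
    then have "C > 0" using C_lower by simp
    then have \<eta>: "sqrt (8 * C / real \<tau>0) > 0"
      and balance: "C / sqrt (8 * C / real \<tau>0) + real \<tau>0 * sqrt (8 * C / real \<tau>0) / 8
          = sqrt (real \<tau>0 / 2 * C)"
      using balanced_learning_rate[of C "real \<tau>0"] \<tau>0 by simp_all
    show ?thesis
      using fixed_share_adaptive_regret_bound[OF d T \<tau>0 \<eta>] \<eta>
      unfolding C_def[symmetric] balance by blast
  qed
qed

theorem corollary2:
  fixes d T \<tau>0 :: nat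
  assumes "d \<ge> 1" and "T \<ge> 1" and "1 \<le> \<tau>0" and "\<tau>0 \<le> T"
  shows "\<exists>\<eta> \<alpha>. \<eta> > 0 \<and> 0 \<le> \<alpha> \<and> \<alpha> \<le> 1 \<and>
     (\<forall>l :: nat \<Rightarrow> nat \<Rightarrow> real.
        (\<forall>t\<in>{1..T}. \<forall>j<d. 0 \<le> l t j \<and> l t j \<le> 1) \<longrightarrow>
        fs_adaptive_regret d \<eta> \<alpha> l T \<tau>0
          \<le> sqrt (real \<tau>0 / 2 * (real \<tau>0 * bin_entropy (1 / real \<tau>0) + ln (real d)))
        \<and> sqrt (real \<tau>0 / 2 * (real \<tau>0 * bin_entropy (1 / real \<tau>0) + ln (real d)))
          \<le> sqrt (real \<tau>0 / 2 * ln (exp 1 * real d * real \<tau>0)))"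
proof -
  note d = assms(1) and T = assms(2) and \<tau>0 = assms(3)
  define C where "C = real \<tau>0 * bin_entropy (1 / real \<tau>0) + ln (real d)"
  have "C \<le> 1 + ln (real \<tau>0) + ln (real d)"
    unfolding C_def using scaled_bin_entropy_bounds(2)[of "real \<tau>0"] \<tau>0 by simp
  also have "\<dots> = ln (exp 1 * real d * real \<tau>0)" using d \<tau>0 by (simp add: ln_mult)
  finally have entropy_bound:
    "sqrt (real \<tau>0 / 2 * C) \<le> sqrt (real \<tau>0 / 2 * ln (exp 1 * real d * real \<tau>0))"
    by (intro real_sqrt_le_mono mult_left_mono) auto
  obtain \<eta> where "\<eta> > 0" and "\<forall>l :: nat \<Rightarrow> nat \<Rightarrow> real. (\<forall>t\<in>{1..T}. \<forall>j<d. 0 \<le> l t j \<and> l t j \<le> 1)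
      \<longrightarrow> fs_adaptive_regret d \<eta> (1 / real \<tau>0) l T \<tau>0 \<le> sqrt (real \<tau>0 / 2 * C)"
    using fixed_share_tuned_adaptive_regret[OF d T \<tau>0] unfolding C_def by blast
  then show ?thesis
    using entropy_bound \<tau>0 unfolding C_def by (intro exI[of _ \<eta>] exI[of _ "1 / real \<tau>0"]) auto
qed

end
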